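(* Let $\varepsilon>0$, let $E\subset\mathbb R^2$ be a measurable set of finite measure, and let $S\subset\mathbb R^2$ be a set containing balls of arbitrarily large radii. Then there exist $\rho_0>0$ and $\xi_0\in\mathbb R^2$ such that $B(\xi_0,\rho_0)\subset S$, $\|\phi_{\rho_0}*\mathbb 1_E-\mathbb 1_E\|_{L^2}<\varepsilon$, and $\int_E|\cos(\langle\xi_0,x\rangle)|\,dx\ge|E|/3$.
   Context: Fix a nonnegative Schwartz function $\phi$ on $\mathbb R^2$ with $\int\phi=1$ and $\widehat\phi$ supported in the unit ball $B(0,1)$, and put $\phi_\rho(x)=\rho^2\phi(\rho x)$ for $\rho>0$. *)

theory Defs
  imports "HOL-Analysis.Analysis"
begin

type_synonym R2 = "real^2"

inductive_set partial_derivs :: "(R2 \<Rightarrow> real) \<Rightarrow> (R2 \<Rightarrow> real) set" for f where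
  base: "f \<in> partial_derivs f"
| step: "g \<in> partial_derivs f \<Longrightarrow>
           (\<lambda>x. frechet_derivative g (at x) (axis i 1)) \<in> partial_derivs f"

definition schwartz :: "(R2 \<Rightarrow> real) \<Rightarrow> bool" where
  "schwartz f \<longleftrightarrow>
     (\<forall>g \<in> partial_derivs f.
        (\<forall>x. g differentiable (at x)) \<and>
        (\<forall>k::nat. bounded (range (\<lambda>x. (1 + norm x) ^ k * g x))))"

definition fourier :: "(R2 \<Rightarrow> real) \<Rightarrow> R2 \<Rightarrow> complex" where
  "fourier f \<xi> = integral\<^sup>L lborel (\<lambda>x. complex_of_real (f x) * exp (- (\<i> * complex_of_real (x \<bullet> \<xi>))))"

definition dilate :: "(R2 \<Rightarrow> real) \<Rightarrow> real \<Rightarrow> R2 \<Rightarrow> real" where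
  "dilate f \<rho> x = \<rho>^2 * f (\<rho> *\<^sub>R x)"

definition conv :: "(R2 \<Rightarrow> real) \<Rightarrow> (R2 \<Rightarrow> real) \<Rightarrow> R2 \<Rightarrow> real" where
  "conv f g x = integral\<^sup>L lebesgue (\<lambda>y. f (x - y) * g y)"

definition L2_sq :: "(R2 \<Rightarrow> real) \<Rightarrow> ennreal" where
  "L2_sq f = (\<integral>\<^sup>+ x. ennreal ((f x)^2) \<partial>lebesgue)"

end

theory Submission
  imports Defs
begin

(* Since \<phi>_\<rho> is a probability density, (\<phi>_\<rho> * 1_E - 1_E)(x)^2 \<le> \<integral> \<phi>_\<rho>(x - y) |1_E(y) - 1_E(x)| dy.
   Squeeze E between a compact K and an open U with |U - K| small; K and the complement of U
   are at some distance d > 0, so a jump of 1_E between x and y forces x or y into U - K, or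
   |x - y| \<ge> d with x or y in K.  Integrating over x gives
   \<parallel>\<phi>_\<rho> * 1_E - 1_E\<parallel>^2 \<le> 2 |U - K| + 2 |K| \<integral>_{|z| \<ge> \<rho> d} \<phi>,  which is small for large \<rho>.

   For the frequency, fix a direction b and step h.  Where h <b, x> stays away from \<pi>\<int>, the
   Dirichlet kernel bound gives \<Sum>_{k<N} cos^2 <c + k h b, x> \<ge> N/2 - O(1), uniformly in c; and
   this holds on 9/10 of E.  Averaging, some \<xi> = c + k h b has \<integral>_E |cos <\<xi>, x>| \<ge> \<integral>_E cos^2 \<ge> |E|/3,
   and all these \<xi> lie within N h of c, so a large enough ball in S contains B(\<xi>, \<rho>). *)

lemma nn_integral_lborel_affine:
  fixes h :: "'a::euclidean_space \<Rightarrow> ennreal"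
  assumes [measurable]: "h \<in> borel_measurable borel" and c: "c \<noteq> 0"
  shows "integral\<^sup>N lborel h = ennreal (\<bar>c\<bar> ^ DIM('a)) * (\<integral>\<^sup>+x. h (t + c *\<^sub>R x) \<partial>lborel)"
  by (subst lborel_affine[OF c, of t])
     (simp add: nn_integral_density nn_integral_distr nn_integral_cmult)

lemma emeasure_lebesgue_borel: "A \<in> sets borel \<Longrightarrow> emeasure lebesgue A = emeasure lborel A"
  by (simp add: main_part_sets)

lemma ennreal_less_ennrealE:
  assumes "x < ennreal r"
  obtains a where "x = ennreal a" "0 \<le> a" "a < r"
  using assms by (cases x) (auto simp: ennreal_less_iff)

lemma ennreal_add_mult_less:
  fixes a k t :: ennreal
  assumes "a < ennreal \<alpha>" "k < ennreal \<kappa>" "t < ennreal \<tau>" "\<alpha> + \<kappa> * \<tau> \<le> \<beta>"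
  shows "a + k * t < ennreal \<beta>"
proof -
  obtain a' k' t' where a': "a = ennreal a'" "0 \<le> a'" "a' < \<alpha>" and k': "k = ennreal k'" "0 \<le> k'" "k' < \<kappa>"
    and t': "t = ennreal t'" "0 \<le> t'" "t' < \<tau>"
    using assms(1-3) by (metis ennreal_less_ennrealE)
  have "k' * t' \<le> \<kappa> * \<tau>"
    using k' t' by (intro mult_mono) auto
  then have "a' + k' * t' < \<beta>"
    using a' assms(4) by linarith
  moreover have "0 \<le> a' + k' * t'"
    using a' k' t' by simp
  ultimately show ?thesis
    using a' k' t' by (simp add: ennreal_mult[symmetric] ennreal_plus[symmetric] ennreal_less_iff del: ennreal_plus)
qed

lemma tendsto_emeasure_Diff_ball_at_top:
  fixes M :: "'a::real_normed_vector measure"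
  assumes T: "T \<in> sets M" "emeasure M T < \<infinity>" and balls: "\<And>r. ball 0 r \<in> sets M"
  shows "((\<lambda>r. emeasure M (T - ball 0 r)) \<longlongrightarrow> 0) at_top"
proof (rule order_tendstoI)
  fix e :: ennreal assume "e > 0"
  define A where "A n = T - ball 0 (real n)" for n :: nat
  have "(\<lambda>n. emeasure M (A n)) \<longlonglongrightarrow> emeasure M (\<Inter>n. A n)"
  proof (rule Lim_emeasure_decseq)
    show "range A \<subseteq> sets M" "decseq A"
      using T balls by (auto simp: A_def decseq_def)
    show "emeasure M (A n) \<noteq> \<infinity>" for n
      using T emeasure_mono[of "A n" T M] by (auto simp: A_def top_unique)
  qed
  moreover have "(\<Inter>n. A n) = {}"
    using reals_Archimedean2 by (fastforce simp: A_def)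
  ultimately have "eventually (\<lambda>n. emeasure M (A n) < e) sequentially"
    using \<open>e > 0\<close> by (simp add: order_tendstoD(2))
  then obtain n where n: "emeasure M (A n) < e"
    by (auto simp: eventually_sequentially)
  show "eventually (\<lambda>r. emeasure M (T - ball 0 r) < e) at_top"
    unfolding eventually_at_top_linorder
  proof (intro exI allI impI)
    fix r assume "r \<ge> real n"
    then have "emeasure M (T - ball 0 r) \<le> emeasure M (A n)"
      using T balls by (intro emeasure_mono) (auto simp: A_def)
    with n show "emeasure M (T - ball 0 r) < e" by simp
  qed
qed simp

lemma lebesgue_compact_open_approx:
  fixes E :: "'a::euclidean_space set"
  assumes E: "E \<in> sets lebesgue" "emeasure lebesgue E < \<infinity>" and "e > 0"
  obtains K U d where "compact K" "open U" "K \<subseteq> E" "E \<subseteq> U" "emeasure lebesgue (U - K) < ennreal e"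
    "d > 0" "\<And>x y. x \<in> K \<Longrightarrow> y \<notin> U \<Longrightarrow> d \<le> dist x y"
proof -
  have "e / 3 > 0" using \<open>e > 0\<close> by simp
  obtain U where U: "open U" "E \<subseteq> U" "emeasure lebesgue (U - E) < ennreal (e / 3)"
    using sets_lebesgue_outer_open[OF E(1) \<open>e / 3 > 0\<close>] by metis
  obtain T where T: "closed T" "T \<subseteq> E" "emeasure lebesgue (E - T) < ennreal (e / 3)"
    using sets_lebesgue_inner_closed[OF E(1) \<open>e / 3 > 0\<close>] by metis
  have T_sets: "T \<in> sets lebesgue"
    using T(1) by (simp add: borel_closed sets_completionI_sets)
  have "emeasure lebesgue T < \<infinity>"
    using emeasure_mono[OF T(2) E(1)] E(2) by simp
  then have "eventually (\<lambda>r. emeasure lebesgue (T - ball 0 r) < ennreal (e / 3)) at_top"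
    using \<open>e / 3 > 0\<close> T_sets
    by (intro order_tendstoD(2)[OF tendsto_emeasure_Diff_ball_at_top]) auto
  then obtain r where r: "emeasure lebesgue (T - ball 0 r) < ennreal (e / 3)"
    by (auto simp: eventually_at_top_linorder)
  have "compact (T \<inter> cball 0 r)"
    using T(1) by (simp add: closed_Int_compact)
  moreover have "closed (- U)" "T \<inter> cball 0 r \<inter> - U = {}"
    using U T by auto
  ultimately obtain d where d: "d > 0" "\<And>x y. x \<in> T \<inter> cball 0 r \<Longrightarrow> y \<notin> U \<Longrightarrow> d \<le> dist x y"
    using separate_compact_closed by (metis ComplI)
  have sets: "U - E \<in> sets lebesgue" "E - T \<in> sets lebesgue" "T - ball 0 r \<in> sets lebesgue"
    using E(1) T_sets U(1) by (auto simp: borel_open)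
  have "emeasure lebesgue (U - T \<inter> cball 0 r) \<le> emeasure lebesgue ((U - E) \<union> (E - T) \<union> (T - ball 0 r))"
    using sets by (intro emeasure_mono) auto
  also have "\<dots> \<le> emeasure lebesgue (U - E) + emeasure lebesgue (E - T) + emeasure lebesgue (T - ball 0 r)"
    using sets by (intro order_trans[OF emeasure_subadditive] add_right_mono emeasure_subadditive) auto
  also have "\<dots> < ennreal (e / 3) + ennreal (e / 3) + ennreal (e / 3)"
    using U(3) T(3) r by (intro add_strict_mono)
  also have "\<dots> = ennreal e"
    using \<open>e > 0\<close> by (simp add: ennreal_plus[symmetric] del: ennreal_plus)
  finally show thesis
    using that[of "T \<inter> cball 0 r" U d] \<open>compact (T \<inter> cball 0 r)\<close> d U T by auto
qed

lemma power2_integral_indicator_diff_le: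
  fixes P :: "'a \<Rightarrow> real"
  assumes [measurable]: "P \<in> borel_measurable M" and P_nonneg: "\<And>y. P y \<ge> 0"
    and P_int: "(\<integral>\<^sup>+y. ennreal (P y) \<partial>M) = 1"
    and [measurable]: "E \<in> sets M" and c: "c = 0 \<or> c = 1"
  shows "ennreal ((\<integral>y. P y * indicator E y \<partial>M - c)\<^sup>2) \<le> (\<integral>\<^sup>+y. ennreal (P y * \<bar>indicator E y - c\<bar>) \<partial>M)"
proof -
  have P_integrable: "integrable M P"
    using P_nonneg P_int by (intro integrableI_nonneg) auto
  then have P_integral: "integral\<^sup>L M P = 1"
    using nn_integral_eq_integral[OF P_integrable] P_nonneg P_int by simp
  moreover have PE_integrable: "integrable M (\<lambda>y. P y * indicator E y)"
    using integrable_mult_indicator[OF _ P_integrable, of E] by (simp add: mult.commute)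
  ultimately have diff: "(\<integral>y. P y * indicator E y \<partial>M) - c = (\<integral>y. P y * (indicator E y - c) \<partial>M)"
    using P_integrable by (simp add: right_diff_distrib)
  have diff_integrable: "integrable M (\<lambda>y. P y * \<bar>indicator E y - c\<bar>)"
    using P_integrable c by (auto intro: Bochner_Integration.integrable_bound[where f=P] simp: indicator_def P_nonneg)
  have abs_diff_le: "\<bar>(\<integral>y. P y * indicator E y \<partial>M) - c\<bar> \<le> (\<integral>y. P y * \<bar>indicator E y - c\<bar> \<partial>M)"
    unfolding diff using integral_abs_bound[of M "\<lambda>y. P y * (indicator E y - c)"]
    by (simp add: abs_mult P_nonneg)
  have "0 \<le> (\<integral>y. P y * indicator E y \<partial>M)"
    by (simp add: P_nonneg)
  moreover have "(\<integral>y. P y * indicator E y \<partial>M) \<le> 1"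
    unfolding P_integral[symmetric]
    by (intro integral_mono PE_integrable P_integrable) (auto simp: P_nonneg indicator_def)
  ultimately have "\<bar>(\<integral>y. P y * indicator E y \<partial>M) - c\<bar> \<le> 1"
    using c by auto
  then have "((\<integral>y. P y * indicator E y \<partial>M) - c)\<^sup>2 \<le> \<bar>(\<integral>y. P y * indicator E y \<partial>M) - c\<bar>"
    by (metis abs_ge_zero abs_mult_self_eq mult_left_le power2_eq_square)
  then have "((\<integral>y. P y * indicator E y \<partial>M) - c)\<^sup>2 \<le> (\<integral>y. P y * \<bar>indicator E y - c\<bar> \<partial>M)"
    using abs_diff_le by linarith
  then show ?thesis
    using nn_integral_eq_integral[OF diff_integrable] P_nonneg by (simp add: ennreal_leI)
qed

lemma set_integrable_bounded:
  fixes f :: "'a \<Rightarrow> real"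
  assumes "A \<in> fmeasurable M" "f \<in> borel_measurable M" "\<And>x. x \<in> A \<Longrightarrow> \<bar>f x\<bar> \<le> B"
  shows "set_integrable M A f"
  unfolding set_integrable_def
proof (rule Bochner_Integration.integrable_bound[where f="\<lambda>x. B * indicator A x"])
  show "integrable M (\<lambda>x. B * indicator A x)"
    using assms(1) by (simp add: fmeasurable_def)
  show "(\<lambda>x. indicator A x *\<^sub>R f x) \<in> borel_measurable M"
    using assms(1,2) by (intro borel_measurable_scaleR borel_measurable_indicator) auto
  show "AE x in M. norm (indicator A x *\<^sub>R f x) \<le> norm (B * indicator A x)"
    using assms(3) by (intro AE_I2) (fastforce simp: indicator_def)
qed

lemma set_integral_sq_le_set_integral_abs:
  fixes g :: "'a \<Rightarrow> real"
  assumes "A \<subseteq> E" "A \<in> sets M" "E \<in> fmeasurable M"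
    and g [measurable]: "g \<in> borel_measurable M" and g_le: "\<And>x. \<bar>g x\<bar> \<le> 1"
  shows "(LINT x:A|M. (g x)\<^sup>2) \<le> (LINT x:E|M. \<bar>g x\<bar>)"
proof -
  have sq_le: "(g x)\<^sup>2 \<le> \<bar>g x\<bar>" for x
  proof -
    have "\<bar>g x\<bar> * \<bar>g x\<bar> \<le> \<bar>g x\<bar> * 1"
      by (rule mult_left_mono[OF g_le abs_ge_zero])
    then show ?thesis
      by (simp add: power2_eq_square)
  qed
  have "A \<in> fmeasurable M"
    using fmeasurableI2[OF \<open>E \<in> fmeasurable M\<close> \<open>A \<subseteq> E\<close> \<open>A \<in> sets M\<close>] .
  then have "set_integrable M A (\<lambda>x. (g x)\<^sup>2)"
    by (rule set_integrable_bounded[where B=1]) (simp_all add: abs_square_le_1 g_le)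
  moreover have "set_integrable M E (\<lambda>x. \<bar>g x\<bar>)"
    using \<open>E \<in> fmeasurable M\<close> by (rule set_integrable_bounded[where B=1]) (simp_all add: g_le)
  ultimately show ?thesis
    unfolding set_lebesgue_integral_def set_integrable_def
    by (rule integral_mono) (use sq_le \<open>A \<subseteq> E\<close> in \<open>auto simp: indicator_def\<close>)
qed

lemma exists_lessThan_ge_of_sum_ge:
  fixes f :: "nat \<Rightarrow> real"
  assumes "real N * a \<le> (\<Sum>k<N. f k)" "N > 0"
  shows "\<exists>k<N. a \<le> f k"
proof (rule ccontr)
  assume "\<not> (\<exists>k<N. a \<le> f k)"
  then have "(\<Sum>k<N. f k) < (\<Sum>k<N. a)"
    using \<open>N > 0\<close> by (intro sum_strict_mono) auto
  with assms(1) show False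
    by simp
qed


section \<open>Mollification of an indicator function\<close>

lemma nn_integral_dilate_translate:
  fixes h :: "R2 \<Rightarrow> ennreal"
  assumes [measurable]: "h \<in> borel_measurable borel" and \<rho>: "\<rho> > 0"
  shows "(\<integral>\<^sup>+y. ennreal (\<rho>^2) * h (\<rho> *\<^sub>R (x - y)) \<partial>lborel) = integral\<^sup>N lborel h"
    and "(\<integral>\<^sup>+x. ennreal (\<rho>^2) * h (\<rho> *\<^sub>R (x - y)) \<partial>lborel) = integral\<^sup>N lborel h"
  using nn_integral_lborel_affine[of h "-\<rho>" "\<rho> *\<^sub>R x"] nn_integral_lborel_affine[of h \<rho> "- \<rho> *\<^sub>R y"] \<rho>
  by (simp_all add: nn_integral_cmult scaleR_diff_right)

definition tail :: "('a::euclidean_space \<Rightarrow> real) \<Rightarrow> real \<Rightarrow> ennreal" where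
  "tail \<phi> t = (\<integral>\<^sup>+z. ennreal (\<phi> z) * indicator (- ball 0 t) z \<partial>lborel)"

lemma tendsto_tail_at_top:
  fixes \<phi> :: "'a::euclidean_space \<Rightarrow> real"
  assumes [measurable]: "\<phi> \<in> borel_measurable borel" and \<phi>_int: "(\<integral>\<^sup>+z. ennreal (\<phi> z) \<partial>lborel) < \<infinity>"
  shows "(tail \<phi> \<longlongrightarrow> 0) at_top"
proof -
  let ?M = "density lborel (\<lambda>z. ennreal (\<phi> z))"
  have "tail \<phi> = (\<lambda>r. emeasure ?M (UNIV - ball 0 r))"
    by (simp add: fun_eq_iff tail_def emeasure_density Compl_eq_Diff_UNIV)
  moreover have "((\<lambda>r. emeasure ?M (UNIV - ball 0 r)) \<longlongrightarrow> 0) at_top"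
    using \<phi>_int by (intro tendsto_emeasure_Diff_ball_at_top) (simp_all add: emeasure_density)
  ultimately show ?thesis
    by simp
qed

lemma nn_integral_dilate_kernel:
  fixes \<phi> :: "R2 \<Rightarrow> real"
  assumes [measurable]: "\<phi> \<in> borel_measurable borel" and \<phi>_nonneg: "\<And>z. \<phi> z \<ge> 0" and \<rho>: "\<rho> > 0"
  shows "(\<integral>\<^sup>+y. ennreal (dilate \<phi> \<rho> (x - y)) \<partial>lborel) = (\<integral>\<^sup>+z. ennreal (\<phi> z) \<partial>lborel)"
    and "(\<integral>\<^sup>+x. ennreal (dilate \<phi> \<rho> (x - y)) \<partial>lborel) = (\<integral>\<^sup>+z. ennreal (\<phi> z) \<partial>lborel)"
    and "(\<integral>\<^sup>+y. ennreal (dilate \<phi> \<rho> (x - y)) * indicator (- ball x d) y \<partial>lborel) = tail \<phi> (\<rho> * d)"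
    and "(\<integral>\<^sup>+x. ennreal (dilate \<phi> \<rho> (x - y)) * indicator (- ball y d) x \<partial>lborel) = tail \<phi> (\<rho> * d)"
proof -
  have dilate: "ennreal (dilate \<phi> \<rho> z) = ennreal (\<rho>^2) * ennreal (\<phi> (\<rho> *\<^sub>R z))" for z
    using \<phi>_nonneg by (simp add: dilate_def ennreal_mult)
  have indicator_row: "indicator (- ball x d) y = (indicator (- ball 0 (\<rho> * d)) (\<rho> *\<^sub>R (x - y)) :: ennreal)"
    and indicator_col: "indicator (- ball y d) x = (indicator (- ball 0 (\<rho> * d)) (\<rho> *\<^sub>R (x - y)) :: ennreal)"
    for x y :: R2
    using \<rho> by (simp_all add: indicator_def dist_norm norm_minus_commute)
  have [measurable]: "(\<lambda>z. ennreal (\<phi> z) * indicator (- ball 0 (\<rho> * d)) z) \<in> borel_measurable borel"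
    by measurable
  note translate = nn_integral_dilate_translate[OF _ \<rho>]
  show "(\<integral>\<^sup>+y. ennreal (dilate \<phi> \<rho> (x - y)) \<partial>lborel) = (\<integral>\<^sup>+z. ennreal (\<phi> z) \<partial>lborel)"
    unfolding dilate by (rule translate) measurable
  show "(\<integral>\<^sup>+x. ennreal (dilate \<phi> \<rho> (x - y)) \<partial>lborel) = (\<integral>\<^sup>+z. ennreal (\<phi> z) \<partial>lborel)"
    unfolding dilate by (rule translate) measurable
  show "(\<integral>\<^sup>+y. ennreal (dilate \<phi> \<rho> (x - y)) * indicator (- ball x d) y \<partial>lborel) = tail \<phi> (\<rho> * d)"
    unfolding dilate indicator_row tail_def mult.assoc by (rule translate) measurable
  show "(\<integral>\<^sup>+x. ennreal (dilate \<phi> \<rho> (x - y)) * indicator (- ball y d) x \<partial>lborel) = tail \<phi> (\<rho> * d)"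
    unfolding dilate indicator_col tail_def mult.assoc by (rule translate) measurable
qed

definition jump_weight :: "'a::metric_space set \<Rightarrow> 'a set \<Rightarrow> real \<Rightarrow> 'a \<Rightarrow> 'a \<Rightarrow> ennreal" where
  "jump_weight A K d x y = indicator A x + indicator K x * indicator (- ball x d) y"

lemma indicator_jump_le_jump_weight:
  assumes "K \<subseteq> E" "E \<subseteq> U" and separated: "\<And>x y. x \<in> K \<Longrightarrow> y \<notin> U \<Longrightarrow> d \<le> dist x y"
  shows "ennreal \<bar>indicator E y - indicator E x\<bar> \<le> jump_weight (U - K) K d x y + jump_weight (U - K) K d y x"
  using assms by (auto simp: jump_weight_def indicator_def dist_commute dest: separated)

lemma nn_integral_dilate_jump_weight:
  fixes \<phi> :: "R2 \<Rightarrow> real"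
  assumes [measurable]: "\<phi> \<in> borel_measurable borel" and \<phi>_nonneg: "\<And>z. \<phi> z \<ge> 0"
    and \<phi>_mass: "(\<integral>\<^sup>+z. ennreal (\<phi> z) \<partial>lborel) = 1" and \<rho>: "\<rho> > 0"
    and [measurable]: "A \<in> sets borel" "K \<in> sets borel"
  shows "(\<integral>\<^sup>+x. \<integral>\<^sup>+y. ennreal (dilate \<phi> \<rho> (x - y)) * (jump_weight A K d x y + jump_weight A K d y x) \<partial>lborel \<partial>lborel)
    = 2 * (emeasure lborel A + emeasure lborel K * tail \<phi> (\<rho> * d))"
proof -
  let ?P = "\<lambda>x y. ennreal (dilate \<phi> \<rho> (x - y))" and ?\<tau> = "tail \<phi> (\<rho> * d)"
  have [measurable]: "(\<lambda>(x, y). ?P x y) \<in> borel_measurable (lborel \<Otimes>\<^sub>M lborel)"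
    unfolding dilate_def by measurable
  have jump_weight_eq: "jump_weight A K d x y = indicator A x + indicator K x * of_bool (d \<le> dist x y)" for x y
    by (simp add: jump_weight_def indicator_def)
  have [measurable]: "(\<lambda>(x, y). jump_weight A K d x y) \<in> borel_measurable (lborel \<Otimes>\<^sub>M lborel)"
    "(\<lambda>(x, y). jump_weight A K d y x) \<in> borel_measurable (lborel \<Otimes>\<^sub>M lborel)"
    unfolding jump_weight_eq by measurable
  note kernel = nn_integral_dilate_kernel[OF _ \<phi>_nonneg \<rho>]
  have row: "(\<integral>\<^sup>+y. ?P x y * jump_weight A K d x y \<partial>lborel) = indicator A x + indicator K x * ?\<tau>" for x
    unfolding jump_weight_def distrib_left
    by (simp add: nn_integral_add nn_integral_cmult nn_integral_multc mult.left_commute[of _ "indicator K x"] kernel \<phi>_mass)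
  have col: "(\<integral>\<^sup>+x. ?P x y * jump_weight A K d y x \<partial>lborel) = indicator A y + indicator K y * ?\<tau>" for y
    unfolding jump_weight_def distrib_left
    by (simp add: nn_integral_add nn_integral_cmult nn_integral_multc mult.left_commute[of _ "indicator K y"] kernel \<phi>_mass)
  have total: "(\<integral>\<^sup>+x. indicator A x + indicator K x * ?\<tau> \<partial>lborel) = emeasure lborel A + emeasure lborel K * ?\<tau>"
    by (simp add: nn_integral_add nn_integral_multc)
  have "(\<integral>\<^sup>+x. \<integral>\<^sup>+y. ?P x y * (jump_weight A K d x y + jump_weight A K d y x) \<partial>lborel \<partial>lborel)
      = (\<integral>\<^sup>+x. \<integral>\<^sup>+y. ?P x y * jump_weight A K d x y \<partial>lborel \<partial>lborel)
        + (\<integral>\<^sup>+x. \<integral>\<^sup>+y. ?P x y * jump_weight A K d y x \<partial>lborel \<partial>lborel)"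
    by (simp add: distrib_left nn_integral_add)
  also have "(\<integral>\<^sup>+x. \<integral>\<^sup>+y. ?P x y * jump_weight A K d y x \<partial>lborel \<partial>lborel)
      = (\<integral>\<^sup>+y. \<integral>\<^sup>+x. ?P x y * jump_weight A K d y x \<partial>lborel \<partial>lborel)"
    by (rule lborel_pair.Fubini') measurable
  finally show ?thesis
    by (simp add: row col total mult_2)
qed

lemma L2_sq_dilate_conv_indicator_le:
  fixes \<phi> :: "R2 \<Rightarrow> real"
  assumes \<phi>_measurable [measurable]: "\<phi> \<in> borel_measurable borel" and \<phi>_nonneg: "\<And>z. \<phi> z \<ge> 0"
    and \<phi>_mass: "(\<integral>\<^sup>+z. ennreal (\<phi> z) \<partial>lborel) = 1" and "\<rho> > 0"
    and E: "E \<in> sets lebesgue" and KU: "compact K" "open U" "K \<subseteq> E" "E \<subseteq> U"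
    and separated: "\<And>x y. x \<in> K \<Longrightarrow> y \<notin> U \<Longrightarrow> d \<le> dist x y"
  shows "L2_sq (\<lambda>x. conv (dilate \<phi> \<rho>) (indicator E) x - indicator E x)
    \<le> 2 * (emeasure lborel (U - K) + emeasure lborel K * tail \<phi> (\<rho> * d))"
proof -
  have [measurable]: "U - K \<in> sets borel" "K \<in> sets borel"
    using KU by (auto simp: borel_compact)
  let ?P = "\<lambda>x y. dilate \<phi> \<rho> (x - y)"
  let ?J = "\<lambda>x y. jump_weight (U - K) K d x y + jump_weight (U - K) K d y x"
  have pointwise: "ennreal ((conv (dilate \<phi> \<rho>) (indicator E) x - indicator E x)\<^sup>2)
      \<le> (\<integral>\<^sup>+y. ennreal (?P x y) * ?J x y \<partial>lborel)" for x
  proof -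
    have "ennreal ((conv (dilate \<phi> \<rho>) (indicator E) x - indicator E x)\<^sup>2)
        \<le> (\<integral>\<^sup>+y. ennreal (?P x y * \<bar>indicator E y - indicator E x\<bar>) \<partial>lebesgue)"
      unfolding conv_def
    proof (rule power2_integral_indicator_diff_le)
      show "(\<lambda>y. ?P x y) \<in> borel_measurable lebesgue"
        unfolding dilate_def by (intro measurable_completion) measurable
      show "(\<integral>\<^sup>+y. ennreal (?P x y) \<partial>lebesgue) = 1"
        using nn_integral_dilate_kernel(1)[OF \<phi>_measurable \<phi>_nonneg \<open>\<rho> > 0\<close>] \<phi>_mass
        by (simp add: nn_integral_completion)
    qed (use \<phi>_nonneg E in \<open>auto simp: dilate_def indicator_def\<close>)
    also have "\<dots> \<le> (\<integral>\<^sup>+y. ennreal (?P x y) * ?J x y \<partial>lebesgue)"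
      using indicator_jump_le_jump_weight[OF \<open>K \<subseteq> E\<close> \<open>E \<subseteq> U\<close> separated] \<phi>_nonneg
      by (intro nn_integral_mono) (auto simp: ennreal_mult dilate_def intro: mult_left_mono)
    also have "\<dots> = (\<integral>\<^sup>+y. ennreal (?P x y) * ?J x y \<partial>lborel)"
      by (rule nn_integral_completion)
    finally show ?thesis .
  qed
  have "L2_sq (\<lambda>x. conv (dilate \<phi> \<rho>) (indicator E) x - indicator E x)
      \<le> (\<integral>\<^sup>+x. \<integral>\<^sup>+y. ennreal (?P x y) * ?J x y \<partial>lborel \<partial>lebesgue)"
    unfolding L2_sq_def by (intro nn_integral_mono pointwise)
  also have "\<dots> = (\<integral>\<^sup>+x. \<integral>\<^sup>+y. ennreal (?P x y) * ?J x y \<partial>lborel \<partial>lborel)"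
    by (rule nn_integral_completion)
  also have "\<dots> = 2 * (emeasure lborel (U - K) + emeasure lborel K * tail \<phi> (\<rho> * d))"
    by (rule nn_integral_dilate_jump_weight[OF _ \<phi>_nonneg \<phi>_mass \<open>\<rho> > 0\<close>]) measurable
  finally show ?thesis .
qed

lemma L2_sq_dilate_conv_indicator_less:
  fixes \<phi> :: "R2 \<Rightarrow> real"
  assumes \<phi>_measurable: "\<phi> \<in> borel_measurable borel" and \<phi>_nonneg: "\<And>z. \<phi> z \<ge> 0"
    and \<phi>_mass: "(\<integral>\<^sup>+z. ennreal (\<phi> z) \<partial>lborel) = 1"
    and E: "E \<in> sets lebesgue" "emeasure lebesgue E < \<infinity>" and "\<eta> > 0"
  shows "\<exists>\<rho>>0. L2_sq (\<lambda>x. conv (dilate \<phi> \<rho>) (indicator E) x - indicator E x) < ennreal \<eta>"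
proof -
  obtain K U d where KU: "compact K" "open U" "K \<subseteq> E" "E \<subseteq> U"
    and UK: "emeasure lebesgue (U - K) < ennreal (\<eta> / 4)"
    and "d > 0" and separated: "\<And>x y. x \<in> K \<Longrightarrow> y \<notin> U \<Longrightarrow> d \<le> dist x y"
    using lebesgue_compact_open_approx[OF E, of "\<eta> / 4"] \<open>\<eta> > 0\<close> by auto
  define m where "m = measure lebesgue E"
  define c where "c = \<eta> / (4 * (m + 1))"
  have "m \<ge> 0"
    by (simp add: m_def)
  then have "c > 0"
    using \<open>\<eta> > 0\<close> by (simp add: c_def)
  have "eventually (\<lambda>t. tail \<phi> t < ennreal c) at_top"
    using \<open>c > 0\<close> \<phi>_mass by (intro order_tendstoD(2)[OF tendsto_tail_at_top[OF \<phi>_measurable]]) auto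
  then obtain t0 where t0: "\<And>t. t \<ge> t0 \<Longrightarrow> tail \<phi> t < ennreal c"
    by (auto simp: eventually_at_top_linorder)
  define \<rho> where "\<rho> = (\<bar>t0\<bar> + 1) / d"
  have "\<rho> > 0" "\<rho> * d \<ge> t0"
    using \<open>d > 0\<close> by (auto simp: \<rho>_def)
  have [simp]: "U - K \<in> sets borel" "K \<in> sets borel"
    using KU by (auto simp: borel_compact)
  have "emeasure lborel K \<le> ennreal m"
    using emeasure_mono[OF \<open>K \<subseteq> E\<close> E(1)] E(2)
    by (simp add: emeasure_lebesgue_borel m_def emeasure_eq_ennreal_measure)
  also have "\<dots> < ennreal (m + 1)"
    using \<open>m \<ge> 0\<close> by (simp add: ennreal_lessI)
  finally have "emeasure lborel K < ennreal (m + 1)" .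
  moreover have "emeasure lborel (U - K) < ennreal (\<eta> / 4)"
    using UK by (simp add: emeasure_lebesgue_borel)
  moreover have "\<eta> / 4 + (m + 1) * c \<le> \<eta> / 2"
    using \<open>m \<ge> 0\<close> by (simp add: c_def field_simps)
  ultimately have "emeasure lborel (U - K) + emeasure lborel K * tail \<phi> (\<rho> * d) < ennreal (\<eta> / 2)"
    using t0[OF \<open>\<rho> * d \<ge> t0\<close>] by (intro ennreal_add_mult_less)
  then have "2 * (emeasure lborel (U - K) + emeasure lborel K * tail \<phi> (\<rho> * d)) < 2 * ennreal (\<eta> / 2)"
    by (rule ennreal_mult_strict_left_mono) simp_all
  also have "2 * ennreal (\<eta> / 2) = ennreal \<eta>"
    using ennreal_mult[of 2 "\<eta> / 2"] \<open>\<eta> > 0\<close> by simp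
  finally have "2 * (emeasure lborel (U - K) + emeasure lborel K * tail \<phi> (\<rho> * d)) < ennreal \<eta>" .
  with L2_sq_dilate_conv_indicator_le[OF \<phi>_measurable \<phi>_nonneg \<phi>_mass \<open>\<rho> > 0\<close> E(1) KU separated]
  show ?thesis
    using \<open>\<rho> > 0\<close> by (blast intro: le_less_trans)
qed


section \<open>Frequencies with large cosine mass\<close>

lemma sum_cos_arith_progression:
  fixes a b :: real
  shows "2 * sin (b / 2) * (\<Sum>k<N. cos (a + real k * b)) = sin (a + (real N - 1/2) * b) - sin (a - b / 2)"
proof (induction N)
  case (Suc N)
  have "sin (u + v) - sin (u - v) = 2 * sin v * cos u" for u v :: real
    by (simp add: sin_add sin_diff)
  from this[of "a + real N * b" "b / 2"]
  have "2 * sin (b / 2) * cos (a + real N * b) = sin (a + (real N + 1/2) * b) - sin (a + (real N - 1/2) * b)"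
    by (simp add: algebra_simps)
  with Suc show ?case
    by (simp add: distrib_left add.commute)
qed simp

lemma abs_sum_cos_arith_progression_le:
  fixes a b s :: real
  assumes "s > 0" "s \<le> \<bar>sin (b / 2)\<bar>"
  shows "\<bar>\<Sum>k<N. cos (a + real k * b)\<bar> \<le> 1 / s"
proof -
  let ?S = "\<Sum>k<N. cos (a + real k * b)"
  have "\<bar>2 * sin (b / 2) * ?S\<bar> \<le> 2"
    unfolding sum_cos_arith_progression
    using abs_sin_le_one[of "a + (real N - 1/2) * b"] abs_sin_le_one[of "a - b / 2"] by linarith
  then have "\<bar>sin (b / 2)\<bar> * \<bar>?S\<bar> \<le> 1"
    by (simp add: abs_mult)
  then have "s * \<bar>?S\<bar> \<le> 1"
    using assms by (meson abs_ge_zero mult_right_mono order_trans)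
  then show ?thesis
    using assms by (simp add: field_simps)
qed

lemma sum_cos_sq_arith_progression_ge:
  fixes a b s :: real
  assumes "s > 0" "s \<le> \<bar>sin b\<bar>"
  shows "real N / 2 - 1 / (2 * s) \<le> (\<Sum>k<N. (cos (a + real k * b))\<^sup>2)"
proof -
  have "(cos t)\<^sup>2 = 1 / 2 + cos (2 * t) / 2" for t :: real
    using cos_double_cos[of t] by (simp add: field_simps)
  then have "(\<Sum>k<N. (cos (a + real k * b))\<^sup>2) = (\<Sum>k<N. 1 / 2 + cos (2 * a + real k * (2 * b)) / 2)"
    by (simp add: distrib_left mult.left_commute)
  also have "\<dots> = real N / 2 + (\<Sum>k<N. cos (2 * a + real k * (2 * b))) / 2"
    by (simp add: sum.distrib sum_divide_distrib)
  finally have "(\<Sum>k<N. (cos (a + real k * b))\<^sup>2) = real N / 2 + (\<Sum>k<N. cos (2 * a + real k * (2 * b))) / 2" .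
  moreover have "\<bar>\<Sum>k<N. cos (2 * a + real k * (2 * b))\<bar> \<le> 1 / s"
    using assms by (intro abs_sum_cos_arith_progression_le) auto
  ultimately show ?thesis
    by (simp add: abs_le_iff)
qed

lemma sin_inverse_sq_le_abs_sin:
  fixes M t :: real
  assumes "1 \<le> M" "1 / M \<le> \<bar>t\<bar>" "\<bar>t\<bar> \<le> M"
  shows "0 < sin (1 / M\<^sup>2)" "sin (1 / M\<^sup>2) \<le> \<bar>sin (t / M)\<bar>"
proof -
  have lower: "0 < 1 / M\<^sup>2" "1 / M\<^sup>2 \<le> \<bar>t\<bar> / M"
    using assms by (auto simp: power2_eq_square field_simps)
  have upper: "0 \<le> \<bar>t\<bar> / M" "\<bar>t\<bar> / M \<le> 1"
    using assms by auto
  show "0 < sin (1 / M\<^sup>2)"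
    using lower upper pi_gt3 by (intro sin_gt_zero) auto
  have "sin (1 / M\<^sup>2) \<le> sin (\<bar>t\<bar> / M)"
    using lower upper pi_gt3 by (subst sin_mono_le_eq) linarith+
  moreover have "\<bar>sin (t / M)\<bar> = \<bar>sin (\<bar>t\<bar> / M)\<bar>"
    by (cases "t \<ge> 0") auto
  ultimately show "sin (1 / M\<^sup>2) \<le> \<bar>sin (t / M)\<bar>"
    by linarith
qed

lemma tendsto_measure_Int_strip:
  fixes E :: "'a::euclidean_space set" and b :: 'a
  assumes E: "E \<in> lmeasurable" and "b \<noteq> 0"
  shows "(\<lambda>n. measure lebesgue (E \<inter> {x. 1 / (real n + 1) \<le> \<bar>b \<bullet> x\<bar> \<and> \<bar>b \<bullet> x\<bar> \<le> real n + 1}))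
    \<longlonglongrightarrow> measure lebesgue E"
proof -
  define A where "A n = E \<inter> {x. 1 / (real n + 1) \<le> \<bar>b \<bullet> x\<bar> \<and> \<bar>b \<bullet> x\<bar> \<le> real n + 1}" for n :: nat
  have A_sets: "range A \<subseteq> sets lebesgue"
  proof -
    have "{x. 1 / (real n + 1) \<le> \<bar>b \<bullet> x\<bar> \<and> \<bar>b \<bullet> x\<bar> \<le> real n + 1} \<in> sets borel" for n
      by measurable
    then show ?thesis
      using E by (auto simp: A_def)
  qed
  have "incseq A"
  proof (rule incseq_SucI)
    fix n
    have "1 / (real n + 2) \<le> 1 / (real n + 1)"
      by (simp add: frac_le)
    then show "A n \<subseteq> A (Suc n)"
      by (auto simp: A_def add.commute)
  qed
  have union: "(\<Union>n. A n) = E - {x. b \<bullet> x = 0}"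
  proof (intro equalityI subsetI)
    fix x assume x: "x \<in> E - {x. b \<bullet> x = 0}"
    obtain n :: nat where n: "max \<bar>b \<bullet> x\<bar> (1 / \<bar>b \<bullet> x\<bar>) < real n"
      using reals_Archimedean2 by blast
    then have "1 / (real n + 1) \<le> \<bar>b \<bullet> x\<bar>"
      using x by (auto simp: field_simps)
    with n x show "x \<in> (\<Union>n. A n)"
      by (auto simp: A_def)
  qed (auto simp: A_def)
  have null: "{x. b \<bullet> x = 0} \<in> null_sets lebesgue"
    using negligible_hyperplane[of b 0] \<open>b \<noteq> 0\<close> by (simp add: negligible_iff_null_sets)
  then have "E - {x. b \<bullet> x = 0} \<in> lmeasurable"
    using E by (intro fmeasurable_Diff) auto
  then have "emeasure lebesgue (\<Union>n. A n) \<noteq> \<infinity>"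
    unfolding union infinity_ennreal_def by (rule fmeasurableD2)
  then have "(\<lambda>n. measure lebesgue (A n)) \<longlonglongrightarrow> measure lebesgue (E - {x. b \<bullet> x = 0})"
    unfolding union[symmetric] by (rule Lim_measure_incseq[OF A_sets \<open>incseq A\<close>])
  then show ?thesis
    using E null by (simp add: A_def measure_Diff_null_set)
qed

lemma exists_strip_measure_ge:
  fixes E :: "'a::euclidean_space set" and b :: 'a
  assumes E: "E \<in> lmeasurable" and "b \<noteq> 0" and "\<theta> < 1"
  obtains M where "M \<ge> 1" "\<theta> * measure lebesgue E \<le> measure lebesgue (E \<inter> {x. 1 / M \<le> \<bar>b \<bullet> x\<bar> \<and> \<bar>b \<bullet> x\<bar> \<le> M})"
proof (cases "measure lebesgue E = 0")
  case True
  show thesis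
    by (rule that[of 1]) (simp_all add: True)
next
  case False
  then have "measure lebesgue E > 0"
    using measure_nonneg[of lebesgue E] by linarith
  then have "\<theta> * measure lebesgue E < measure lebesgue E"
    using \<open>\<theta> < 1\<close> by simp
  with tendsto_measure_Int_strip[OF E \<open>b \<noteq> 0\<close>]
  have "eventually (\<lambda>n. \<theta> * measure lebesgue E
      < measure lebesgue (E \<inter> {x. 1 / (real n + 1) \<le> \<bar>b \<bullet> x\<bar> \<and> \<bar>b \<bullet> x\<bar> \<le> real n + 1})) sequentially"
    by (rule order_tendstoD(1))
  then obtain n where "\<theta> * measure lebesgue E
      < measure lebesgue (E \<inter> {x. 1 / (real n + 1) \<le> \<bar>b \<bullet> x\<bar> \<and> \<bar>b \<bullet> x\<bar> \<le> real n + 1})"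
    by (auto simp: eventually_sequentially)
  then show thesis
    by (intro that[of "real n + 1"]) auto
qed

lemma sum_set_integral_cos_sq_ge:
  fixes A :: "'a::euclidean_space set" and b c :: 'a
  assumes A: "A \<in> lmeasurable" and "s > 0" and sin_ge: "\<And>x. x \<in> A \<Longrightarrow> s \<le> \<bar>sin (h * (b \<bullet> x))\<bar>"
  shows "(real N / 2 - 1 / (2 * s)) * measure lebesgue A
    \<le> (\<Sum>k<N. LINT x:A|lebesgue. (cos ((c + (real k * h) *\<^sub>R b) \<bullet> x))\<^sup>2)"
proof -
  define F where "F k x = (cos ((c + (real k * h) *\<^sub>R b) \<bullet> x))\<^sup>2" for k x
  have integrable: "set_integrable lebesgue A (F k)" for k
    using A unfolding F_def
    by (intro set_integrable_bounded[where B=1] measurable_completion) (simp_all add: abs_square_le_1)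
  then have sum_integrable: "set_integrable lebesgue A (\<lambda>x. \<Sum>k<N. F k x)"
    unfolding set_integrable_def scaleR_sum_right by (intro Bochner_Integration.integrable_sum) blast
  have "emeasure lebesgue A \<noteq> \<infinity>"
    using A unfolding infinity_ennreal_def by (rule fmeasurableD2)
  with A have "(real N / 2 - 1 / (2 * s)) * measure lebesgue A = (LINT x:A|lebesgue. real N / 2 - 1 / (2 * s))"
    by (simp add: set_integral_const fmeasurableD field_simps)
  also have "\<dots> \<le> (LINT x:A|lebesgue. \<Sum>k<N. F k x)"
  proof (rule set_integral_mono[OF _ sum_integrable])
    show "set_integrable lebesgue A (\<lambda>x. real N / 2 - 1 / (2 * s))"
      using A by (intro set_integrable_bounded[where B="\<bar>real N / 2 - 1 / (2 * s)\<bar>"]) simp_all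
    fix x assume "x \<in> A"
    have "(c + (real k * h) *\<^sub>R b) \<bullet> x = c \<bullet> x + real k * (h * (b \<bullet> x))" for k
      by (simp add: inner_add_left)
    then show "real N / 2 - 1 / (2 * s) \<le> (\<Sum>k<N. F k x)"
      using sum_cos_sq_arith_progression_ge[OF \<open>s > 0\<close> sin_ge[OF \<open>x \<in> A\<close>]] by (simp add: F_def)
  qed
  also have "\<dots> = (\<Sum>k<N. LINT x:A|lebesgue. F k x)"
    unfolding set_lebesgue_integral_def scaleR_sum_right
    by (rule Bochner_Integration.integral_sum) (use integrable in \<open>simp add: set_integrable_def\<close>)
  finally show ?thesis
    by (simp add: F_def)
qed

lemma exists_subset_abs_sin_inner_ge:
  fixes E :: "'a::euclidean_space set" and b :: 'a
  assumes E: "E \<in> lmeasurable" and "b \<noteq> 0" and "\<theta> < 1"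
  obtains A h s where "A \<in> lmeasurable" "A \<subseteq> E" "\<theta> * measure lebesgue E \<le> measure lebesgue A"
    "h > 0" "s > 0" "\<And>x. x \<in> A \<Longrightarrow> s \<le> \<bar>sin (h * (b \<bullet> x))\<bar>"
proof -
  obtain M where "M \<ge> 1"
    and strip: "\<theta> * measure lebesgue E \<le> measure lebesgue (E \<inter> {x. 1 / M \<le> \<bar>b \<bullet> x\<bar> \<and> \<bar>b \<bullet> x\<bar> \<le> M})"
    using exists_strip_measure_ge[OF E \<open>b \<noteq> 0\<close> \<open>\<theta> < 1\<close>] by auto
  define A where "A = E \<inter> {x. 1 / M \<le> \<bar>b \<bullet> x\<bar> \<and> \<bar>b \<bullet> x\<bar> \<le> M}"
  have "{x. 1 / M \<le> \<bar>b \<bullet> x\<bar> \<and> \<bar>b \<bullet> x\<bar> \<le> M} \<in> sets borel"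
    by measurable
  then have "A \<in> sets lebesgue"
    using E by (auto simp: A_def)
  moreover have "A \<subseteq> E"
    by (auto simp: A_def)
  ultimately have "A \<in> lmeasurable"
    using fmeasurableI2[OF E] by blast
  show thesis
  proof (rule that[of A "1 / M" "sin (1 / M\<^sup>2)"])
    show "sin (1 / M\<^sup>2) \<le> \<bar>sin (1 / M * (b \<bullet> x))\<bar>" if "x \<in> A" for x
      using sin_inverse_sq_le_abs_sin(2)[OF \<open>M \<ge> 1\<close>, of "b \<bullet> x"] that by (simp add: A_def)
    show "sin (1 / M\<^sup>2) > 0"
      using sin_inverse_sq_le_abs_sin(1)[of M 1] \<open>M \<ge> 1\<close> by simp
  qed (use \<open>A \<in> lmeasurable\<close> \<open>A \<subseteq> E\<close> strip \<open>M \<ge> 1\<close> in \<open>auto simp: A_def\<close>)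
qed

lemma exists_frequency_step:
  fixes E :: "'a::euclidean_space set" and b :: 'a
  assumes E: "E \<in> lmeasurable" and "b \<noteq> 0"
  obtains h N where "h > 0"
    "\<And>c. \<exists>k<N. measure lebesgue E / 3 \<le> (LINT x:E|lebesgue. \<bar>cos ((c + (real k * h) *\<^sub>R b) \<bullet> x)\<bar>)"
proof -
  obtain A h s where A: "A \<in> lmeasurable" "A \<subseteq> E" "9/10 * measure lebesgue E \<le> measure lebesgue A"
    and "h > 0" "s > 0" and sin_ge: "\<And>x. x \<in> A \<Longrightarrow> s \<le> \<bar>sin (h * (b \<bullet> x))\<bar>"
    using exists_subset_abs_sin_inner_ge[OF E \<open>b \<noteq> 0\<close>, of "9/10"] by auto
  define N where "N = nat \<lceil>10 / s\<rceil> + 1"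
  have "10 / s \<le> real N"
    unfolding N_def by linarith
  then have "N > 0" "9/20 * real N \<le> real N / 2 - 1 / (2 * s)"
    using \<open>s > 0\<close> by (auto simp: N_def field_simps)
  show thesis
  proof (rule that[OF \<open>h > 0\<close>])
    fix c
    let ?cos = "\<lambda>k x. cos ((c + (real k * h) *\<^sub>R b) \<bullet> x)"
    have "9/20 * real N * (9/10 * measure lebesgue E) \<le> (real N / 2 - 1 / (2 * s)) * measure lebesgue A"
      using A \<open>9/20 * real N \<le> real N / 2 - 1 / (2 * s)\<close> by (intro mult_mono) auto
    moreover have "0 \<le> real N * measure lebesgue E"
      by simp
    ultimately have "real N * (measure lebesgue E / 3) \<le> (real N / 2 - 1 / (2 * s)) * measure lebesgue A"
      by linarith
    also have "\<dots> \<le> (\<Sum>k<N. LINT x:A|lebesgue. (?cos k x)\<^sup>2)"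
      by (rule sum_set_integral_cos_sq_ge[OF A(1) \<open>s > 0\<close> sin_ge])
    also have "\<dots> \<le> (\<Sum>k<N. LINT x:E|lebesgue. \<bar>?cos k x\<bar>)"
      using A E by (intro sum_mono set_integral_sq_le_set_integral_abs measurable_completion) auto
    finally show "\<exists>k<N. measure lebesgue E / 3 \<le> (LINT x:E|lebesgue. \<bar>?cos k x\<bar>)"
      using \<open>N > 0\<close> by (rule exists_lessThan_ge_of_sum_ge)
  qed
qed

lemma exists_frequency_in_ball:
  fixes E S :: "'a::euclidean_space set"
  assumes E: "E \<in> lmeasurable" and S_balls: "\<forall>R::real. \<exists>\<xi> r. r \<ge> R \<and> ball \<xi> r \<subseteq> S"
  shows "\<exists>\<xi>. ball \<xi> \<rho> \<subseteq> S \<and> measure lebesgue E / 3 \<le> (LINT x:E|lebesgue. \<bar>cos (\<xi> \<bullet> x)\<bar>)"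
proof -
  obtain b :: 'a where "b \<in> Basis"
    using nonempty_Basis by blast
  then have "b \<noteq> 0" "norm b = 1"
    by auto
  obtain h N where "h > 0"
    and good: "\<And>c. \<exists>k<N. measure lebesgue E / 3 \<le> (LINT x:E|lebesgue. \<bar>cos ((c + (real k * h) *\<^sub>R b) \<bullet> x)\<bar>)"
    using exists_frequency_step[OF E \<open>b \<noteq> 0\<close>] by blast
  obtain c r where r: "r \<ge> real N * h + \<rho>" and "ball c r \<subseteq> S"
    using S_balls by blast
  obtain k where "k < N"
    and cos_ge: "measure lebesgue E / 3 \<le> (LINT x:E|lebesgue. \<bar>cos ((c + (real k * h) *\<^sub>R b) \<bullet> x)\<bar>)"
    using good by blast
  have "dist (c + (real k * h) *\<^sub>R b) c \<le> real N * h"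
    using \<open>k < N\<close> \<open>h > 0\<close> \<open>norm b = 1\<close> by (simp add: dist_norm)
  then have "ball (c + (real k * h) *\<^sub>R b) \<rho> \<subseteq> ball c r"
    using r by (simp add: ball_subset_ball_iff)
  with \<open>ball c r \<subseteq> S\<close> cos_ge show ?thesis
    by blast
qed


theorem lemma8p7:
  fixes \<phi> :: "R2 \<Rightarrow> real" and \<epsilon> :: real and E S :: "R2 set"
  assumes phi_schwartz: "schwartz \<phi>"
    and phi_nonneg: "\<forall>x. \<phi> x \<ge> 0"
    and phi_int: "integral\<^sup>L lborel \<phi> = 1"
    and phi_hat_supp: "\<forall>\<xi>. fourier \<phi> \<xi> \<noteq> 0 \<longrightarrow> \<xi> \<in> cball 0 1"
    and eps: "\<epsilon> > 0"
    and E_meas: "E \<in> sets lebesgue"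
    and E_fin: "emeasure lebesgue E < \<infinity>"
    and S_balls: "\<forall>R::real. \<exists>\<xi> r. r \<ge> R \<and> ball \<xi> r \<subseteq> S"
  shows "\<exists>\<rho>0 > 0. \<exists>\<xi>0. ball \<xi>0 \<rho>0 \<subseteq> S
           \<and> L2_sq (\<lambda>x. conv (dilate \<phi> \<rho>0) (indicator E) x - indicator E x) < ennreal (\<epsilon>^2)
           \<and> (LINT x:E|lebesgue. \<bar>cos (\<xi>0 \<bullet> x)\<bar>) \<ge> measure lebesgue E / 3"
proof -
  have "\<phi> differentiable (at x)" for x
    using phi_schwartz partial_derivs.base[of \<phi>] unfolding schwartz_def by blast
  then have "continuous_on UNIV \<phi>"
    by (simp add: differentiable_imp_continuous_within continuous_at_imp_continuous_on)
  then have \<phi>_measurable: "\<phi> \<in> borel_measurable borel"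
    by (rule borel_measurable_continuous_onI)
  have \<phi>_integrable: "integrable lborel \<phi>"
    using phi_int not_integrable_integral_eq by fastforce
  have \<phi>_mass: "(\<integral>\<^sup>+x. ennreal (\<phi> x) \<partial>lborel) = 1"
    using nn_integral_eq_integral[OF \<phi>_integrable] phi_nonneg phi_int by simp
  obtain \<rho> where "\<rho> > 0" "L2_sq (\<lambda>x. conv (dilate \<phi> \<rho>) (indicator E) x - indicator E x) < ennreal (\<epsilon>^2)"
    using L2_sq_dilate_conv_indicator_less[OF \<phi>_measurable _ \<phi>_mass E_meas E_fin, of "\<epsilon>^2"] phi_nonneg eps
    by auto
  moreover obtain \<xi> where "ball \<xi> \<rho> \<subseteq> S" "measure lebesgue E / 3 \<le> (LINT x:E|lebesgue. \<bar>cos (\<xi> \<bullet> x)\<bar>)"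
    using exists_frequency_in_ball[of E S \<rho>] E_meas E_fin S_balls by (auto simp: fmeasurable_def)
  ultimately show ?thesis
    by blast
qed

end
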